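(* Let $t,s$ be two trees of $\mathcal{A}$ different from $|$, let $k$ be the number of internal vertices on the right-most branch of $t$ and $l$ the number of internal vertices on the left-most branch of $s$. Then $$t*s=\sum_{\sigma\in\mathrm{QSh}(k,l)}\sigma(t,s).$$
   Context: Trees: planar rooted trees in which every internal vertex has at least two children; the root vertex hangs from a trunk edge; leaves are edges without upper vertex; $|$ is the one-leaf tree. $\mathcal A$ is the $\mathbb K$-vector space with basis these trees, with products defined recursively: $x_0\vee\cdots\vee x_k$ ($k\ge1$) grafts trees left to right on a new root vertex; for $x=x^{(0)}\vee\cdots\vee x^{(k)}$, $y=y^{(0)}\vee\cdots\vee y^{(l)}$: $x\prec y=x^{(0)}\vee\cdots\vee x^{(k-1)}\vee(x^{(k)}*y)$, $x\cdot y=x^{(0)}\vee\cdots\vee x^{(k-1)}\vee(x^{(k)}*y^{(0)})\vee y^{(1)}\vee\cdots\vee y^{(l)}$, $x\succ y=(x*y^{(0)})\vee y^{(1)}\vee\cdots\vee y^{(l)}$, with $*=\prec+\cdot+\succ$ and $|*z=z*|=z$. A $(k,l)$-quasi-shuffle is a surjection $\sigma:\{1,\dots,k+l\}\to\{1,\dots,n\}$ (for some $n$) with $\sigma(1)<\cdots<\sigma(k)$ and $\sigma(k+1)<\cdots<\sigma(k+l)$; $\mathrm{QSh}(k,l)$ is their set. Comb representations: the right-most branch of $t$ is the path from the root always going to the right-most child; let $v_1,\dots,v_k$ be its internal vertices (from the root up) and $F_i$ the (nonempty) forest of subtrees rooted at the children of $v_i$ other than its right-most child. Likewise let $w_1,\dots,w_l$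 be the internal vertices on the left-most branch of $s$ and $F_{k+j}$ the forest of subtrees rooted at the children of $w_j$ other than its left-most child. For $\sigma\in\mathrm{QSh}(k,l)$ with image $\{1,\dots,n\}$, $\sigma(t,s)$ is the tree built from a ladder of internal vertices $u_1$ (root), $u_2,\dots,u_n$, $u_{p+1}$ a child of $u_p$ and the ladder child of $u_n$ a leaf, where the children of $u_p$ are, from left to right: the trees of $F_i$ if $\sigma(i)=p$ for some $i\le k$, then the ladder child, then the trees of $F_{k+j}$ if $\sigma(k+j)=p$ for some $j\le l$. *)

theory Defs
  imports Main "HOL-Library.Poly_Mapping"
begin

text \<open>A tree is either the one-leaf tree (Leaf, written | in the paper) or a root
vertex with an ordered (left-to-right) list of subtrees grafted on it.\<close>

datatype tree = Leaf | Node "tree list"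

fun valid :: "tree \<Rightarrow> bool" where
  "valid Leaf = True"
| "valid (Node ts) = (2 \<le> length ts \<and> (\<forall>u\<in>set ts. valid u))"

definition lin_map :: "(tree \<Rightarrow> tree) \<Rightarrow> (tree \<Rightarrow>\<^sub>0 'k::comm_ring_1) \<Rightarrow> (tree \<Rightarrow>\<^sub>0 'k)" where
  "lin_map f v = (\<Sum>u\<in>Poly_Mapping.keys v. Poly_Mapping.single (f u) (Poly_Mapping.lookup v u))"

lemma size_last_less: "xs \<noteq> [] \<Longrightarrow> size (last xs) < Suc (size_list size xs)"
  by (induction xs) auto

lemma size_hd_less: "xs \<noteq> [] \<Longrightarrow> size (hd xs) < Suc (size_list size xs)"
  by (cases xs) auto

lemma size_last_hd_less:
  "xs \<noteq> [] \<Longrightarrow> ys \<noteq> [] \<Longrightarrow>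
   size (last xs) + size (hd ys) < Suc (Suc (size_list size xs + size_list size ys))"
  using size_last_less[of xs] size_hd_less[of ys] by linarith

text \<open>star x y = x * y = (x \<prec> y) + (x \<cdot> y) + (x \<succ> y) on basis trees, where for
x = x0 v ... v xk and y = y0 v ... v yl:
  x \<prec> y = x0 v ... v x(k-1) v (xk * y)
  x \<cdot> y = x0 v ... v x(k-1) v (xk * y0) v y1 v ... v yl
  x \<succ> y = (x * y0) v y1 v ... v yl
and | * z = z * | = z.\<close>

function star :: "tree \<Rightarrow> tree \<Rightarrow> (tree \<Rightarrow>\<^sub>0 'k::comm_ring_1)" where
  "star Leaf y = Poly_Mapping.single y 1"
| "star (Node xs) Leaf = Poly_Mapping.single (Node xs) 1"
| "star (Node xs) (Node ys) =
     (if xs = [] \<or> ys = [] then 0 else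
        lin_map (\<lambda>u. Node (butlast xs @ [u])) (star (last xs) (Node ys))
      + lin_map (\<lambda>u. Node (butlast xs @ [u] @ tl ys)) (star (last xs) (hd ys))
      + lin_map (\<lambda>u. Node (u # tl ys)) (star (Node xs) (hd ys)))"
  by pat_completeness auto
termination
  by (relation "measure (\<lambda>(x, y). size x + size y)")
     (auto dest: size_last_less size_hd_less intro: size_last_hd_less)

text \<open>(k,l)-quasi-shuffles as functions nat => nat, fixed to 0 outside {1..k+l}.\<close>
definition QSh :: "nat \<Rightarrow> nat \<Rightarrow> (nat \<Rightarrow> nat) set" where
  "QSh k l = {\<sigma>. (\<exists>n. \<sigma> ` {1..k+l} = {1..n})
                 \<and> strict_mono_on {1..k} \<sigma>
                 \<and> strict_mono_on {k+1..k+l} \<sigma>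
                 \<and> (\<forall>i. i \<notin> {1..k+l} \<longrightarrow> \<sigma> i = 0)}"

text \<open>rcomb t = [F_1, ..., F_k]: for each internal vertex v_i on the right-most
branch (from the root up), the forest of children of v_i other than the right-most
one. Its length is the number k of internal vertices on the right-most branch.\<close>
function rcomb :: "tree \<Rightarrow> tree list list" where
  "rcomb Leaf = []"
| "rcomb (Node ts) = (if ts = [] then [] else butlast ts # rcomb (last ts))"
  by pat_completeness auto
termination
  by (relation "measure size") (auto dest: size_last_less)

text \<open>lcomb s = [F_{k+1}, ..., F_{k+l}] for the left-most branch of s.\<close>
function lcomb :: "tree \<Rightarrow> tree list list" where
  "lcomb Leaf = []"
| "lcomb (Node ts) = (if ts = [] then [] else tl ts # lcomb (hd ts))"
  by pat_completeness auto
termination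
  by (relation "measure size") (auto dest: size_hd_less)

fun ladder :: "(nat \<Rightarrow> tree list) \<Rightarrow> (nat \<Rightarrow> tree list) \<Rightarrow> nat \<Rightarrow> nat \<Rightarrow> tree" where
  "ladder L R p 0 = Leaf"
| "ladder L R p (Suc m) = Node (L p @ [ladder L R (Suc p) m] @ R p)"

definition qsh_tree :: "(nat \<Rightarrow> nat) \<Rightarrow> tree \<Rightarrow> tree \<Rightarrow> tree" where
  "qsh_tree \<sigma> t s =
     (let k = length (rcomb t); l = length (lcomb s);
          n = card (\<sigma> ` {1..k+l});
          L = (\<lambda>p. concat (map (\<lambda>i. rcomb t ! (i - 1)) (filter (\<lambda>i. \<sigma> i = p) [1..<k+1])));
          R = (\<lambda>p. concat (map (\<lambda>j. lcomb s ! (j - 1)) (filter (\<lambda>j. \<sigma> (k + j) = p) [1..<l+1])))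
      in ladder L R 1 n)"

end

theory Submission
  imports Defs
begin

text \<open>
  Both sides depend on \<open>t\<close> and \<open>s\<close> only through the comb data
  \<open>F\<^sub>1, \<dots>, F\<^sub>k\<close> and \<open>F\<^sub>k\<^sub>+\<^sub>1, \<dots>, F\<^sub>k\<^sub>+\<^sub>l\<close>, and both obey the same recursion in it.
  Writing \<open>t = F\<^sub>1 \<or> t'\<close> and \<open>s = s' \<or> F\<^sub>k\<^sub>+\<^sub>1\<close>, the three products \<open>\<prec>, \<cdot>, \<succ>\<close>
  graft \<open>F\<^sub>1\<close>, both \<open>F\<^sub>1\<close> and \<open>F\<^sub>k\<^sub>+\<^sub>1\<close>, or \<open>F\<^sub>k\<^sub>+\<^sub>1\<close> around \<open>t' * s\<close>, \<open>t' * s'\<close>, \<open>t * s'\<close>.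
  On the other side, the root \<open>u\<^sub>1\<close> of \<open>\<sigma>(t,s)\<close> carries exactly one of these three
  patterns, and deleting it is a bijection from the quasi-shuffles with that pattern onto
  \<open>QSh(k-1,l)\<close>, \<open>QSh(k-1,l-1)\<close> resp. \<open>QSh(k,l-1)\<close> under which \<open>\<sigma>(t,s)\<close> becomes the
  corresponding graft.
\<close>

lemma lin_map_superset:
  assumes "finite U" "Poly_Mapping.keys v \<subseteq> U"
  shows "lin_map f v = (\<Sum>u\<in>U. Poly_Mapping.single (f u) (Poly_Mapping.lookup v u))"
  unfolding lin_map_def
  by (rule sum.mono_neutral_left) (use assms in \<open>auto simp: in_keys_iff\<close>)

lemma lin_map_zero: "lin_map f 0 = 0"
  by (simp add: lin_map_def)

lemma lin_map_add: "lin_map f (v + w) = lin_map f v + lin_map f w"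
proof -
  let ?U = "Poly_Mapping.keys v \<union> Poly_Mapping.keys w \<union> Poly_Mapping.keys (v + w)"
  have "lin_map f (v + w) = (\<Sum>u\<in>?U. Poly_Mapping.single (f u) (Poly_Mapping.lookup (v + w) u))"
    by (rule lin_map_superset) auto
  also have "\<dots> = (\<Sum>u\<in>?U. Poly_Mapping.single (f u) (Poly_Mapping.lookup v u))
      + (\<Sum>u\<in>?U. Poly_Mapping.single (f u) (Poly_Mapping.lookup w u))"
    by (simp add: lookup_add single_add sum.distrib)
  also have "\<dots> = lin_map f v + lin_map f w"
    by (subst (1 2) lin_map_superset[where U = ?U]) auto
  finally show ?thesis .
qed

lemma lin_map_single: "lin_map f (Poly_Mapping.single x c) = Poly_Mapping.single (f x) c"
  by (subst lin_map_superset[where U = "{x}"]) auto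

lemma lin_map_sum: "lin_map f (\<Sum>x\<in>S. g x) = (\<Sum>x\<in>S. lin_map f (g x))"
  by (induction S rule: infinite_finite_induct) (auto simp: lin_map_zero lin_map_add)

section \<open>Quasi-shuffles\<close>

lemma QSh_pos: "\<sigma> \<in> QSh k l \<Longrightarrow> 1 \<le> i \<Longrightarrow> i \<le> k + l \<Longrightarrow> 1 \<le> \<sigma> i"
  unfolding QSh_def by (auto simp: image_subset_iff)

lemma QSh_outside: "\<sigma> \<in> QSh k l \<Longrightarrow> i = 0 \<or> k + l < i \<Longrightarrow> \<sigma> i = 0"
  unfolding QSh_def by auto

lemma QSh_image: "\<sigma> \<in> QSh k l \<Longrightarrow> \<exists>n. \<sigma> ` {1..k+l} = {1..n}"
  unfolding QSh_def by auto

lemma QSh_mono_left: "\<sigma> \<in> QSh k l \<Longrightarrow> 1 \<le> i \<Longrightarrow> i < j \<Longrightarrow> j \<le> k \<Longrightarrow> \<sigma> i < \<sigma> j"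
  unfolding QSh_def strict_mono_on_def by auto

lemma QSh_mono_right: "\<sigma> \<in> QSh k l \<Longrightarrow> k < i \<Longrightarrow> i < j \<Longrightarrow> j \<le> k + l \<Longrightarrow> \<sigma> i < \<sigma> j"
  unfolding QSh_def strict_mono_on_def by auto

lemma QShI:
  assumes "\<sigma> ` {1..k+l} = {1..n}"
    and "\<And>i j. 1 \<le> i \<Longrightarrow> i < j \<Longrightarrow> j \<le> k \<Longrightarrow> \<sigma> i < \<sigma> j"
    and "\<And>i j. k < i \<Longrightarrow> i < j \<Longrightarrow> j \<le> k + l \<Longrightarrow> \<sigma> i < \<sigma> j"
    and "\<And>i. i = 0 \<or> k + l < i \<Longrightarrow> \<sigma> i = 0"
  shows "\<sigma> \<in> QSh k l"
  unfolding QSh_def strict_mono_on_def using assms by auto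

lemma finite_QSh: "finite (QSh k l)"
proof (rule finite_subset)
  show "QSh k l \<subseteq> {f. \<forall>x. (x \<in> {1..k+l} \<longrightarrow> f x \<in> {0..k+l}) \<and> (x \<notin> {1..k+l} \<longrightarrow> f x = 0)}"
  proof safe
    fix \<sigma> x assume \<sigma>: "\<sigma> \<in> QSh k l" and x: "x \<in> {1..k+l}"
    obtain n where n: "\<sigma> ` {1..k+l} = {1..n}" using QSh_image[OF \<sigma>] by blast
    have "n = card (\<sigma> ` {1..k+l})" using n by simp
    also have "\<dots> \<le> k + l" using card_image_le[of "{1..k+l}" \<sigma>] by simp
    moreover have "\<sigma> x \<in> {1..n}" using n x by blast
    ultimately show "\<sigma> x \<in> {0..k+l}" by auto
  qed (use QSh_outside in auto)
qed (intro finite_set_of_finite_funs; simp)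

lemma QSh_first_eq_one:
  assumes \<sigma>: "\<sigma> \<in> QSh k l" and "0 < k + l"
  shows "(0 < k \<and> \<sigma> 1 = 1) \<or> (0 < l \<and> \<sigma> (k + 1) = 1)"
proof -
  obtain n where n: "\<sigma> ` {1..k+l} = {1..n}" using QSh_image[OF \<sigma>] by blast
  have "\<sigma> 1 \<in> {1..n}" unfolding n[symmetric] using \<open>0 < k + l\<close> by (intro imageI) auto
  then have "1 \<in> \<sigma> ` {1..k+l}" unfolding n by simp
  then obtain i where i: "1 \<le> i" "i \<le> k + l" "\<sigma> i = 1" by auto
  show ?thesis
  proof (cases "i \<le> k")
    case True
    have "\<sigma> 1 \<le> \<sigma> i" using QSh_mono_left[OF \<sigma>, of 1 i] True i by (cases "i = 1") auto
    moreover have "1 \<le> \<sigma> 1" using QSh_pos[OF \<sigma>, of 1] True i by simp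
    ultimately show ?thesis using True i by auto
  next
    case False
    have "\<sigma> (k + 1) \<le> \<sigma> i" using QSh_mono_right[OF \<sigma>, of "k + 1" i] False i by (cases "i = k + 1") auto
    moreover have "1 \<le> \<sigma> (k + 1)" using QSh_pos[OF \<sigma>, of "k + 1"] False i by simp
    ultimately have "\<sigma> (k + 1) = 1" using i(3) by linarith
    moreover have "0 < l" using False i by linarith
    ultimately show ?thesis by blast
  qed
qed

section \<open>The root vertex of a quasi-shuffle\<close>

text \<open>For \<open>a, b \<le> 1\<close> with \<open>0 < a + b\<close>: the quasi-shuffles of \<open>(a + k, b + l)\<close> whose root vertex
  \<open>u\<^sub>1\<close> receives the first left forest iff \<open>a = 1\<close> and the first right forest iff \<open>b = 1\<close>.\<close>
definition QSh_root :: "nat \<Rightarrow> nat \<Rightarrow> nat \<Rightarrow> nat \<Rightarrow> (nat \<Rightarrow> nat) set" where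
  "QSh_root a b k l = {\<tau> \<in> QSh (a + k) (b + l).
     (0 < a + k \<longrightarrow> (\<tau> 1 = 1 \<longleftrightarrow> a = 1)) \<and> (0 < b + l \<longrightarrow> (\<tau> (a + k + 1) = 1 \<longleftrightarrow> b = 1))}"

definition qsh_add_root :: "nat \<Rightarrow> nat \<Rightarrow> nat \<Rightarrow> nat \<Rightarrow> (nat \<Rightarrow> nat) \<Rightarrow> nat \<Rightarrow> nat" where
  "qsh_add_root a b k l \<sigma> i =
     (if i = 0 then 0
      else if i \<le> a then 1
      else if i \<le> a + k then Suc (\<sigma> (i - a))
      else if i \<le> a + k + b then 1
      else if i \<le> a + k + b + l then Suc (\<sigma> (i - a - b))
      else 0)"

definition qsh_del_root :: "nat \<Rightarrow> nat \<Rightarrow> nat \<Rightarrow> nat \<Rightarrow> (nat \<Rightarrow> nat) \<Rightarrow> nat \<Rightarrow> nat" where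
  "qsh_del_root a b k l \<tau> i =
     (if i = 0 then 0
      else if i \<le> k then \<tau> (a + i) - 1
      else if i \<le> k + l then \<tau> (a + b + i) - 1
      else 0)"

lemma qsh_add_root_image:
  assumes "a \<le> 1" "b \<le> 1" "0 < a + b"
  shows "qsh_add_root a b k l \<sigma> ` {1..a+k+(b+l)} = insert 1 (Suc ` \<sigma> ` {1..k+l})"
proof
  show "qsh_add_root a b k l \<sigma> ` {1..a+k+(b+l)} \<subseteq> insert 1 (Suc ` \<sigma> ` {1..k+l})"
    by (force simp: qsh_add_root_def)
  have "1 \<in> qsh_add_root a b k l \<sigma> ` {1..a+k+(b+l)}"
  proof (cases "a = 1")
    case True
    then show ?thesis by (intro rev_image_eqI[of 1]) (auto simp: qsh_add_root_def)
  next
    case False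
    then show ?thesis using assms
      by (intro rev_image_eqI[of "a + k + 1"]) (auto simp: qsh_add_root_def)
  qed
  moreover have "Suc (\<sigma> j) \<in> qsh_add_root a b k l \<sigma> ` {1..a+k+(b+l)}" if "j \<in> {1..k+l}" for j
  proof (cases "j \<le> k")
    case True
    then show ?thesis using that by (intro rev_image_eqI[of "a + j"]) (auto simp: qsh_add_root_def)
  next
    case False
    then show ?thesis using that by (intro rev_image_eqI[of "a + b + j"]) (auto simp: qsh_add_root_def)
  qed
  ultimately show "insert 1 (Suc ` \<sigma> ` {1..k+l}) \<subseteq> qsh_add_root a b k l \<sigma> ` {1..a+k+(b+l)}"
    by blast
qed

lemma qsh_add_root_in_QSh_root:
  assumes ab: "a \<le> 1" "b \<le> 1" "0 < a + b" and \<sigma>: "\<sigma> \<in> QSh k l"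
  shows "qsh_add_root a b k l \<sigma> \<in> QSh_root a b k l"
proof -
  obtain n where n: "\<sigma> ` {1..k+l} = {1..n}" using QSh_image[OF \<sigma>] by blast
  note pos = QSh_pos[OF \<sigma>]
  have "qsh_add_root a b k l \<sigma> \<in> QSh (a + k) (b + l)"
  proof (rule QShI)
    show "qsh_add_root a b k l \<sigma> ` {1..a+k+(b+l)} = {1..Suc n}"
      unfolding qsh_add_root_image[OF ab] n by (auto simp: image_Suc_atLeastAtMost)
  next
    fix i j assume ij: "1 \<le> i" "i < j" "j \<le> a + k"
    moreover have "1 \<le> \<sigma> (j - a)" by (rule pos) (use ij ab(1) in linarith)+
    ultimately show "qsh_add_root a b k l \<sigma> i < qsh_add_root a b k l \<sigma> j"
      using QSh_mono_left[OF \<sigma>, of "i - a" "j - a"] ab by (auto simp: qsh_add_root_def)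
  next
    fix i j assume ij: "a + k < i" "i < j" "j \<le> a + k + (b + l)"
    moreover have "1 \<le> \<sigma> (j - a - b)" by (rule pos) (use ij ab(2) in linarith)+
    ultimately show "qsh_add_root a b k l \<sigma> i < qsh_add_root a b k l \<sigma> j"
      using QSh_mono_right[OF \<sigma>, of "i - a - b" "j - a - b"] ab by (auto simp: qsh_add_root_def)
  qed (auto simp: qsh_add_root_def)
  moreover have "0 < a + k \<Longrightarrow> qsh_add_root a b k l \<sigma> 1 = 1 \<longleftrightarrow> a = 1"
    using pos[of 1] ab by (cases "a = 0") (auto simp: qsh_add_root_def)
  moreover have "0 < b + l \<Longrightarrow> qsh_add_root a b k l \<sigma> (a + k + 1) = 1 \<longleftrightarrow> b = 1"
    using pos[of "k + 1"] ab by (cases "b = 0") (auto simp: qsh_add_root_def)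
  ultimately show ?thesis unfolding QSh_root_def by blast
qed

lemma QSh_root_eq_one_iff:
  assumes "a \<le> 1" "b \<le> 1" and \<tau>: "\<tau> \<in> QSh_root a b k l" and i: "1 \<le> i" "i \<le> a + k + (b + l)"
  shows "\<tau> i = 1 \<longleftrightarrow> i \<le> a \<or> (a + k < i \<and> i \<le> a + k + b)"
proof -
  have q: "\<tau> \<in> QSh (a + k) (b + l)" and root_left: "0 < a + k \<Longrightarrow> \<tau> 1 = 1 \<longleftrightarrow> a = 1"
    and root_right: "0 < b + l \<Longrightarrow> \<tau> (a + k + 1) = 1 \<longleftrightarrow> b = 1"
    using \<tau> unfolding QSh_root_def by auto
  show ?thesis
  proof (cases "i \<le> a + k")
    case True
    have "\<tau> 1 < \<tau> i" if "1 < i" using QSh_mono_left[OF q, of 1 i] that True by simp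
    moreover have "0 < a + k" using True i by linarith
    ultimately show ?thesis using root_left QSh_pos[OF q, of 1] True i assms(1,2)
      by (cases "i = 1") auto
  next
    case False
    have "\<tau> (a + k + 1) < \<tau> i" if "a + k + 1 < i" using QSh_mono_right[OF q, of "a + k + 1" i] that i by simp
    moreover have "0 < b + l" using False i by linarith
    ultimately show ?thesis using root_right QSh_pos[OF q, of "a + k + 1"] False i assms(1,2)
      by (cases "i = a + k + 1") auto
  qed
qed

lemma qsh_add_del_root:
  assumes ab: "a \<le> 1" "b \<le> 1" and \<tau>: "\<tau> \<in> QSh_root a b k l"
  shows "qsh_add_root a b k l (qsh_del_root a b k l \<tau>) = \<tau>"
proof
  fix i
  have q: "\<tau> \<in> QSh (a + k) (b + l)" using \<tau> unfolding QSh_root_def by blast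
  show "qsh_add_root a b k l (qsh_del_root a b k l \<tau>) i = \<tau> i"
  proof (cases "1 \<le> i \<and> i \<le> a + k + (b + l)")
    case True
    then show ?thesis using QSh_root_eq_one_iff[OF ab \<tau>, of i] QSh_pos[OF q, of i]
      by (auto simp: qsh_add_root_def qsh_del_root_def)
  next
    case False
    then show ?thesis using QSh_outside[OF q, of i] by (auto simp: qsh_add_root_def)
  qed
qed

lemma qsh_del_add_root: "\<sigma> \<in> QSh k l \<Longrightarrow> qsh_del_root a b k l (qsh_add_root a b k l \<sigma>) = \<sigma>"
  by (rule ext) (auto simp: qsh_add_root_def qsh_del_root_def QSh_outside)

lemma qsh_del_root_in_QSh:
  assumes ab: "a \<le> 1" "b \<le> 1" "0 < a + b" and \<tau>: "\<tau> \<in> QSh_root a b k l"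
  shows "qsh_del_root a b k l \<tau> \<in> QSh k l"
proof -
  let ?\<sigma> = "qsh_del_root a b k l \<tau>"
  have q: "\<tau> \<in> QSh (a + k) (b + l)" using \<tau> unfolding QSh_root_def by blast
  have pos: "1 \<le> ?\<sigma> i" if "1 \<le> i" "i \<le> k + l" for i
    using that QSh_root_eq_one_iff[OF ab(1,2) \<tau>, of "a + i"] QSh_pos[OF q, of "a + i"]
      QSh_root_eq_one_iff[OF ab(1,2) \<tau>, of "a + b + i"] QSh_pos[OF q, of "a + b + i"]
    by (auto simp: qsh_del_root_def)
  obtain N where N: "\<tau> ` {1..a+k+(b+l)} = {1..N}" using QSh_image[OF q] by blast
  have eq: "insert 1 (Suc ` ?\<sigma> ` {1..k+l}) = {1..N}"
    using qsh_add_root_image[OF ab, of k l ?\<sigma>] qsh_add_del_root[OF ab(1,2) \<tau>] N by simp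
  have img: "?\<sigma> ` {1..k+l} = {1..N - 1}"
  proof (intro set_eqI iffI)
    fix x assume x: "x \<in> ?\<sigma> ` {1..k+l}"
    then have "Suc x \<in> {1..N}" using eq by blast
    moreover have "1 \<le> x" using x pos by auto
    ultimately show "x \<in> {1..N - 1}" by auto
  next
    fix x assume "x \<in> {1..N - 1}"
    then have "Suc x \<in> insert 1 (Suc ` ?\<sigma> ` {1..k+l})" unfolding eq by auto
    then show "x \<in> ?\<sigma> ` {1..k+l}" using \<open>x \<in> {1..N - 1}\<close> by auto
  qed
  show ?thesis
  proof (rule QShI[OF img])
    fix i j assume "1 \<le> i" "i < j" "j \<le> k"
    then show "?\<sigma> i < ?\<sigma> j"
      using QSh_mono_left[OF q, of "a + i" "a + j"] pos[of i] by (auto simp: qsh_del_root_def)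
  next
    fix i j assume "k < i" "i < j" "j \<le> k + l"
    then show "?\<sigma> i < ?\<sigma> j"
      using QSh_mono_right[OF q, of "a + b + i" "a + b + j"] pos[of i] by (auto simp: qsh_del_root_def)
  qed (auto simp: qsh_del_root_def)
qed

lemma bij_betw_qsh_add_root:
  assumes "a \<le> 1" "b \<le> 1" "0 < a + b"
  shows "bij_betw (qsh_add_root a b k l) (QSh k l) (QSh_root a b k l)"
  by (rule bij_betw_byWitness[where f' = "qsh_del_root a b k l"])
    (use assms qsh_del_add_root qsh_add_del_root qsh_add_root_in_QSh_root qsh_del_root_in_QSh in auto)

lemma finite_QSh_root: "finite (QSh_root a b k l)"
  by (rule finite_subset[OF _ finite_QSh[of "a + k" "b + l"]]) (auto simp: QSh_root_def)

lemma QSh_0_0: "QSh 0 0 = {\<lambda>_. 0}"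
  by (auto simp: QSh_def)

lemma QSh_Suc_0: "QSh (Suc k) 0 = QSh_root 1 0 k 0"
  by (auto simp: QSh_root_def dest: QSh_first_eq_one)

lemma QSh_0_Suc: "QSh 0 (Suc l) = QSh_root 0 1 0 l"
  by (auto simp: QSh_root_def dest: QSh_first_eq_one)

lemma QSh_Suc_Suc:
  "QSh (Suc k) (Suc l) = QSh_root 1 0 k (Suc l) \<union> QSh_root 1 1 k l \<union> QSh_root 0 1 (Suc k) l"
  by (auto simp: QSh_root_def dest: QSh_first_eq_one)

section \<open>Comb trees\<close>

definition forests_at :: "(nat \<Rightarrow> nat) \<Rightarrow> tree list list \<Rightarrow> nat \<Rightarrow> tree list" where
  "forests_at \<sigma> Fs p = concat (map (\<lambda>i. Fs ! (i - 1)) (filter (\<lambda>i. \<sigma> i = p) [1..<length Fs + 1]))"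

definition comb_tree :: "(nat \<Rightarrow> nat) \<Rightarrow> tree list list \<Rightarrow> tree list list \<Rightarrow> tree" where
  "comb_tree \<sigma> Fs Gs =
     ladder (forests_at \<sigma> Fs) (forests_at (\<lambda>j. \<sigma> (length Fs + j)) Gs) 1
       (card (\<sigma> ` {1..length Fs + length Gs}))"

definition comb_sum :: "tree list list \<Rightarrow> tree list list \<Rightarrow> (tree \<Rightarrow>\<^sub>0 'k::comm_ring_1)" where
  "comb_sum Fs Gs = (\<Sum>\<sigma>\<in>QSh (length Fs) (length Gs). Poly_Mapping.single (comb_tree \<sigma> Fs Gs) 1)"

lemma qsh_tree_eq_comb_tree: "qsh_tree \<sigma> t s = comb_tree \<sigma> (rcomb t) (lcomb s)"
  unfolding qsh_tree_def comb_tree_def forests_at_def Let_def ..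

lemma forests_at_add_root:
  assumes root: "\<And>j. 1 \<le> j \<Longrightarrow> j \<le> c \<Longrightarrow> \<tau> j = 1"
    and rest: "\<And>j. 1 \<le> j \<Longrightarrow> j \<le> length Fs \<Longrightarrow> \<tau> (c + j) = Suc (\<sigma> j)"
    and pos: "\<And>j. 1 \<le> j \<Longrightarrow> j \<le> length Fs \<Longrightarrow> \<sigma> j \<noteq> 0"
  shows "forests_at \<tau> (replicate c F @ Fs) (Suc q) =
           (if q = 0 then concat (replicate c F) else forests_at \<sigma> Fs q)"
proof -
  let ?n = "length Fs" and ?nth = "\<lambda>i. (replicate c F @ Fs) ! (i - 1)"
  have upt_split: "[1..<c + n + 1] = [1..<c + 1] @ map ((+) c) [1..<n + 1]" for n
    by (induction n) auto
  have root_part: "filter (\<lambda>j. \<tau> j = Suc q) [1..<c + 1] = (if q = 0 then [1..<c + 1] else [])"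
    using root by (auto intro: filter_True filter_False)
  have rest_part: "filter (\<lambda>j. \<tau> j = Suc q) (map ((+) c) [1..<?n + 1])
      = map ((+) c) (filter (\<lambda>j. \<sigma> j = q) [1..<?n + 1])"
    unfolding filter_map o_def by (rule arg_cong[where f = "map _"], rule filter_cong) (auto simp: rest)
  have no_zero: "filter (\<lambda>j. \<sigma> j = 0) [1..<?n + 1] = []"
    using pos by (intro filter_False) fastforce
  have first: "map ?nth [1..<c + 1] = replicate c F"
    by (rule nth_equalityI) (auto simp: nth_append)
  have shifted: "map ?nth (map ((+) c) (filter (\<lambda>j. \<sigma> j = q) [1..<?n + 1]))
      = map (\<lambda>i. Fs ! (i - 1)) (filter (\<lambda>j. \<sigma> j = q) [1..<?n + 1])"
    by (auto simp: nth_append)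
  note unfold = forests_at_def length_append length_replicate upt_split filter_append root_part rest_part
    map_append concat_append shifted
  show ?thesis
  proof (cases "q = 0")
    case True
    show ?thesis unfolding unfold unfolding True refl[THEN eqTrueI] if_True no_zero first by simp
  next
    case False
    then show ?thesis unfolding unfold by simp
  qed
qed

lemma ladder_shift:
  assumes "\<And>q. 1 \<le> q \<Longrightarrow> L' (Suc q) = L q" "\<And>q. 1 \<le> q \<Longrightarrow> R' (Suc q) = R q" "1 \<le> p"
  shows "ladder L' R' (Suc p) n = ladder L R p n"
  using assms(3) by (induction n arbitrary: p) (simp_all add: assms(1,2))

lemma comb_tree_qsh_add_root:
  assumes ab: "a \<le> 1" "b \<le> 1" "0 < a + b" and \<sigma>: "\<sigma> \<in> QSh (length Fs) (length Gs)"
  shows "comb_tree (qsh_add_root a b (length Fs) (length Gs) \<sigma>) (replicate a F @ Fs) (replicate b G @ Gs)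
       = Node (concat (replicate a F) @ [comb_tree \<sigma> Fs Gs] @ concat (replicate b G))"
proof -
  let ?k = "length Fs" and ?l = "length Gs"
  let ?\<tau> = "qsh_add_root a b ?k ?l \<sigma>"
  have pos: "\<sigma> j \<noteq> 0" if "1 \<le> j" "j \<le> ?k + ?l" for j
    using QSh_pos[OF \<sigma> that] by simp
  have "1 \<notin> Suc ` \<sigma> ` {1..?k + ?l}" using pos by fastforce
  then have card: "card (?\<tau> ` {1..a + ?k + (b + ?l)}) = Suc (card (\<sigma> ` {1..?k + ?l}))"
    unfolding qsh_add_root_image[OF ab] by (simp add: card_image)
  have left: "forests_at ?\<tau> (replicate a F @ Fs) (Suc q)
      = (if q = 0 then concat (replicate a F) else forests_at \<sigma> Fs q)" for q
    by (rule forests_at_add_root) (use pos in \<open>auto simp: qsh_add_root_def\<close>)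
  have right: "forests_at (\<lambda>j. ?\<tau> (a + ?k + j)) (replicate b G @ Gs) (Suc q)
      = (if q = 0 then concat (replicate b G) else forests_at (\<lambda>j. \<sigma> (?k + j)) Gs q)" for q
    by (rule forests_at_add_root) (use pos in \<open>auto simp: qsh_add_root_def\<close>)
  have "ladder (forests_at ?\<tau> (replicate a F @ Fs)) (forests_at (\<lambda>j. ?\<tau> (a + ?k + j)) (replicate b G @ Gs))
      (Suc 1) n = ladder (forests_at \<sigma> Fs) (forests_at (\<lambda>j. \<sigma> (?k + j)) Gs) 1 n" for n
    by (rule ladder_shift) (auto simp: left right)
  then show ?thesis
    unfolding comb_tree_def length_append length_replicate card by (simp add: left right)
qed

lemma sum_QSh_root:
  assumes ab: "a \<le> 1" "b \<le> 1" "0 < a + b"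
  shows "(\<Sum>\<tau>\<in>QSh_root a b (length Fs) (length Gs).
            Poly_Mapping.single (comb_tree \<tau> (replicate a F @ Fs) (replicate b G @ Gs)) (1::'k::comm_ring_1))
       = lin_map (\<lambda>u. Node (concat (replicate a F) @ [u] @ concat (replicate b G))) (comb_sum Fs Gs)"
proof -
  let ?k = "length Fs" and ?l = "length Gs"
  have "(\<Sum>\<tau>\<in>QSh_root a b ?k ?l.
            Poly_Mapping.single (comb_tree \<tau> (replicate a F @ Fs) (replicate b G @ Gs)) (1::'k))
      = (\<Sum>\<sigma>\<in>QSh ?k ?l. Poly_Mapping.single
            (comb_tree (qsh_add_root a b ?k ?l \<sigma>) (replicate a F @ Fs) (replicate b G @ Gs)) 1)"
    by (rule sum.reindex_bij_betw[OF bij_betw_qsh_add_root[OF ab], symmetric])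
  also have "\<dots> = (\<Sum>\<sigma>\<in>QSh ?k ?l. Poly_Mapping.single
            (Node (concat (replicate a F) @ [comb_tree \<sigma> Fs Gs] @ concat (replicate b G))) 1)"
    by (rule sum.cong) (simp_all add: comb_tree_qsh_add_root[OF ab])
  finally show ?thesis by (simp add: comb_sum_def lin_map_sum lin_map_single)
qed

lemma comb_sum_Nil_Nil: "comb_sum [] [] = Poly_Mapping.single Leaf 1"
  by (simp add: comb_sum_def QSh_0_0 comb_tree_def)

lemma comb_sum_Cons_Nil: "comb_sum (F # Fs) [] = lin_map (\<lambda>u. Node (F @ [u])) (comb_sum Fs [])"
  using sum_QSh_root[where a = 1 and b = 0 and Fs = Fs and Gs = "[]" and F = F]
  by (simp add: comb_sum_def QSh_Suc_0)

lemma comb_sum_Nil_Cons: "comb_sum [] (G # Gs) = lin_map (\<lambda>u. Node (u # G)) (comb_sum [] Gs)"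
  using sum_QSh_root[where a = 0 and b = 1 and Fs = "[]" and Gs = Gs and G = G]
  by (simp add: comb_sum_def QSh_0_Suc)

lemma comb_sum_Cons_Cons:
  "comb_sum (F # Fs) (G # Gs) =
      lin_map (\<lambda>u. Node (F @ [u])) (comb_sum Fs (G # Gs))
    + lin_map (\<lambda>u. Node (F @ [u] @ G)) (comb_sum Fs Gs)
    + lin_map (\<lambda>u. Node (u # G)) (comb_sum (F # Fs) Gs)"
proof -
  let ?k = "length Fs" and ?l = "length Gs"
  let ?g = "\<lambda>\<tau>. Poly_Mapping.single (comb_tree \<tau> (F # Fs) (G # Gs)) (1::'a::comm_ring_1)"
  have disjoint: "QSh_root 1 0 ?k (Suc ?l) \<inter> QSh_root 1 1 ?k ?l = {}"
    "(QSh_root 1 0 ?k (Suc ?l) \<union> QSh_root 1 1 ?k ?l) \<inter> QSh_root 0 1 (Suc ?k) ?l = {}"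
    by (auto simp: QSh_root_def)
  have "comb_sum (F # Fs) (G # Gs)
      = sum ?g (QSh_root 1 0 ?k (Suc ?l)) + sum ?g (QSh_root 1 1 ?k ?l) + sum ?g (QSh_root 0 1 (Suc ?k) ?l)"
    unfolding comb_sum_def using disjoint by (simp add: QSh_Suc_Suc sum.union_disjoint finite_QSh_root)
  moreover have "sum ?g (QSh_root 1 0 ?k (Suc ?l)) = lin_map (\<lambda>u. Node (F @ [u])) (comb_sum Fs (G # Gs))"
    using sum_QSh_root[where a = 1 and b = 0 and Fs = Fs and Gs = "G # Gs" and F = F] by simp
  moreover have "sum ?g (QSh_root 1 1 ?k ?l) = lin_map (\<lambda>u. Node (F @ [u] @ G)) (comb_sum Fs Gs)"
    using sum_QSh_root[where a = 1 and b = 1 and Fs = Fs and Gs = Gs and F = F and G = G] by simp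
  moreover have "sum ?g (QSh_root 0 1 (Suc ?k) ?l) = lin_map (\<lambda>u. Node (u # G)) (comb_sum (F # Fs) Gs)"
    using sum_QSh_root[where a = 0 and b = 1 and Fs = "F # Fs" and Gs = Gs and G = G] by simp
  ultimately show ?thesis by simp
qed

lemma comb_sum_lcomb: "valid s \<Longrightarrow> comb_sum [] (lcomb s) = Poly_Mapping.single s 1"
proof (induction s rule: lcomb.induct)
  case (2 ts)
  then have "ts \<noteq> []" "valid (hd ts)" by (cases ts; auto)+
  with 2 show ?case by (simp add: comb_sum_Nil_Cons lin_map_single)
qed (simp add: comb_sum_Nil_Nil)

lemma comb_sum_rcomb: "valid t \<Longrightarrow> comb_sum (rcomb t) [] = Poly_Mapping.single t 1"
proof (induction t rule: rcomb.induct)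
  case (2 ts)
  then have "ts \<noteq> []" by auto
  with 2 have "valid (last ts)" by simp
  with 2 \<open>ts \<noteq> []\<close> show ?case by (simp add: comb_sum_Cons_Nil lin_map_single)
qed (simp add: comb_sum_Nil_Nil)

lemma star_eq_comb_sum: "valid t \<Longrightarrow> valid s \<Longrightarrow> star t s = comb_sum (rcomb t) (lcomb s)"
proof (induction t s rule: star.induct)
  case (1 s)
  then show ?case by (simp add: comb_sum_lcomb)
next
  case (2 ts)
  then show ?case by (simp add: comb_sum_rcomb del: rcomb.simps)
next
  case (3 ts us)
  then have "ts \<noteq> []" "us \<noteq> []" by auto
  with 3 have "valid (last ts)" "valid (hd us)" by auto
  with 3 \<open>ts \<noteq> []\<close> \<open>us \<noteq> []\<close> show ?case by (simp add: comb_sum_Cons_Cons)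
qed

theorem mainTheorem8:
  fixes t s :: tree
  assumes "valid t" and "valid s" and "t \<noteq> Leaf" and "s \<noteq> Leaf"
  shows "(star t s :: tree \<Rightarrow>\<^sub>0 'k::field) =
         (\<Sum>\<sigma>\<in>QSh (length (rcomb t)) (length (lcomb s)). Poly_Mapping.single (qsh_tree \<sigma> t s) 1)"
  using star_eq_comb_sum[OF assms(1,2)] by (simp add: comb_sum_def qsh_tree_eq_comb_tree)

end
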